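(* Let $\alpha\in(0,1)\cup(1,\infty)$ and let $p_{X,Y}=p_Xp_{Y\mid X}$ be a joint distribution on finite alphabets $\mathcal X\times\mathcal Y$. Then $$I_\alpha^{\mathrm S}(X;Y)=\max_{r_{X\mid Y}}F_\alpha^{\mathrm{S1}}(p_X,r_{X\mid Y})=\max_{r_{X\mid Y}}F_\alpha^{\mathrm{S2}}(p_X,r_{X\mid Y}),$$ where $$F_\alpha^{\mathrm{S1}}(p_X,r_{X\mid Y}):=\frac{\alpha}{\alpha-1}\log\sum_{x,y}p_X(x)^{1/\alpha}p_{Y\mid X}(y\mid x)\,r_{X\mid Y}(x\mid y)^{1-\frac1\alpha},$$ $$F_\alpha^{\mathrm{S2}}(p_X,r_{X\mid Y}):=F_\alpha^{\mathrm{S1}}(p_X,r_{X_\alpha\mid Y})=\frac{\alpha}{\alpha-1}\log\sum_{x,y}p_X(x)^{1/\alpha}p_{Y\mid X}(y\mid x)\,r_{X_\alpha\mid Y}(x\mid y)^{1-\frac1\alpha}.$$ Moreover, for $\alpha\in(1,\infty)$, $$I_\alpha^{\mathrm S}(X;Y)=\max_{\tilde q_{X,Y}}\max_{r_{X\mid Y}}\tilde F_\alpha^{\mathrm{S3}}(p_X,\tilde q_{X,Y},r_{X\mid Y}),$$ where, writing $\tilde q_X$ for the $X$-marginal of $\tilde q_{X,Y}$, $$\tilde F_\alpha^{\mathrm{S3}}(p_X,\tilde q_{X,Y},r_{X\mid Y}):=\frac{\alpha}{1-\alpha}D(\tilde q_{X,Y}\,\|\,\tilde q_Xp_{Y\mid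 X})+\mathbb E^{\tilde q_{X,Y}}\!\left[\log\frac{r_{X\mid Y}(X\mid Y)}{\tilde q_X(X)}\right]+\frac{1}{1-\alpha}D(\tilde q_X\,\|\,p_X).$$
   Context: All alphabets are finite and $\log$ is the natural logarithm. $D(p\|q)=\sum_z p(z)\log\frac{p(z)}{q(z)}$ is the Kullback–Leibler divergence. For $\alpha\in(0,1)\cup(1,\infty)$, the Rényi divergence is $D_\alpha(p\|q):=\frac{1}{\alpha-1}\log\sum_z p(z)^\alpha q(z)^{1-\alpha}$, and the Sibson mutual information of order $\alpha$ is $I_\alpha^{\mathrm S}(X;Y):=\min_{q_Y}D_\alpha(p_Xp_{Y\mid X}\|p_Xq_Y)$, the minimum over all distributions $q_Y$ on $\mathcal Y$. A reverse channel $r_{X\mid Y}=\{r_{X\mid Y}(\cdot\mid y)\}_{y\in\mathcal Y}$ is a family of distributions on $\mathcal X$ indexed by $y$; maxima over $r_{X\mid Y}$ range over all reverse channels, and maxima over $\tilde q_{X,Y}$ range over all joint distributions on $\mathcal X\times\mathcal Y$. $r_{X_\alpha\mid Y}$ denotes the $\alpha$-tilted reverse channel, $r_{X_\alpha\mid Y}(x\mid y):=r_{X\mid Y}(x\mid y)^\alpha/\sum_{x'}r_{X\mid Y}(x'\mid y)^\alpha$. $\mathbb E^{q}[\cdot]$ denotes expectation with respect to $q$. *)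

theory Defs
  imports "HOL-Analysis.Analysis"
begin

definition is_pmf :: "('a::finite \<Rightarrow> real) \<Rightarrow> bool" where
  "is_pmf p \<longleftrightarrow> (\<forall>z. 0 \<le> p z) \<and> sum p UNIV = 1"

(* Channel p_{Y|X}: W x y = p_{Y|X}(y|x) *)
definition is_channel :: "('x::finite \<Rightarrow> 'y::finite \<Rightarrow> real) \<Rightarrow> bool" where
  "is_channel W \<longleftrightarrow> (\<forall>x. is_pmf (W x))"

(* Reverse channel r_{X|Y}: r y x = r_{X|Y}(x|y) *)
definition reverse_channels :: "('y::finite \<Rightarrow> 'x::finite \<Rightarrow> real) set" where
  "reverse_channels = {r. \<forall>y. is_pmf (r y)}"

(* Kullback-Leibler divergence, conventions 0 log(0/q) = 0, p log(p/0) = +\<infinity> *)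
definition KL :: "('a::finite \<Rightarrow> real) \<Rightarrow> ('a \<Rightarrow> real) \<Rightarrow> ereal" where
  "KL p q = (if \<exists>z. p z > 0 \<and> q z = 0 then \<infinity>
             else ereal (\<Sum>z\<in>{z. p z > 0}. p z * ln (p z / q z)))"

(* Renyi divergence of order \<alpha>, usual conventions (0^\<alpha> = 0, p^\<alpha> 0^(1-\<alpha>) = +\<infinity> for \<alpha> > 1, p > 0,
   log 0 = -\<infinity>) *)
definition renyi_div :: "real \<Rightarrow> ('a::finite \<Rightarrow> real) \<Rightarrow> ('a \<Rightarrow> real) \<Rightarrow> ereal" where
  "renyi_div \<alpha> p q =
     (let s = (\<Sum>z\<in>{z. p z > 0 \<and> q z > 0}. p z powr \<alpha> * q z powr (1 - \<alpha>)) in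
      if (\<alpha> > 1 \<and> (\<exists>z. p z > 0 \<and> q z = 0)) \<or> s = 0 then \<infinity>
      else ereal (ln s / (\<alpha> - 1)))"

definition sibson_MI :: "real \<Rightarrow> ('x::finite \<Rightarrow> real) \<Rightarrow> ('x \<Rightarrow> 'y::finite \<Rightarrow> real) \<Rightarrow> ereal" where
  "sibson_MI \<alpha> p W =
     (INF q\<in>{q :: 'y \<Rightarrow> real. is_pmf q}.
        renyi_div \<alpha> (\<lambda>(x, y). p x * W x y) (\<lambda>(x, y). p x * q y))"

(* F_\<alpha>^{S1}(p_X, r_{X|Y}) with conventions 0 * anything = 0, 0^(negative) = +\<infinity>, log 0 = -\<infinity>,
   log +\<infinity> = +\<infinity> *)
definition F_S1 :: "real \<Rightarrow> ('x::finite \<Rightarrow> real) \<Rightarrow> ('x \<Rightarrow> 'y::finite \<Rightarrow> real)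
                     \<Rightarrow> ('y \<Rightarrow> 'x \<Rightarrow> real) \<Rightarrow> ereal" where
  "F_S1 \<alpha> p W r =
     (let S = {(x, y). p x > 0 \<and> W x y > 0};
          s = (\<Sum>(x, y)\<in>{(x, y). (x, y) \<in> S \<and> r y x > 0}.
                 p x powr (1 / \<alpha>) * W x y * r y x powr (1 - 1 / \<alpha>)) in
      if (\<alpha> < 1 \<and> (\<exists>(x, y)\<in>S. r y x = 0)) \<or> s = 0 then -\<infinity>
      else ereal (\<alpha> / (\<alpha> - 1) * ln s))"

definition tilt :: "real \<Rightarrow> ('y \<Rightarrow> 'x::finite \<Rightarrow> real) \<Rightarrow> ('y \<Rightarrow> 'x \<Rightarrow> real)" where
  "tilt \<alpha> r = (\<lambda>y x. r y x powr \<alpha> / (\<Sum>x'\<in>UNIV. r y x' powr \<alpha>))"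

definition F_S2 :: "real \<Rightarrow> ('x::finite \<Rightarrow> real) \<Rightarrow> ('x \<Rightarrow> 'y::finite \<Rightarrow> real)
                     \<Rightarrow> ('y \<Rightarrow> 'x \<Rightarrow> real) \<Rightarrow> ereal" where
  "F_S2 \<alpha> p W r = F_S1 \<alpha> p W (tilt \<alpha> r)"

definition marg_X :: "('x \<Rightarrow> 'y::finite \<Rightarrow> real) \<Rightarrow> 'x \<Rightarrow> real" where
  "marg_X q = (\<lambda>x. \<Sum>y\<in>UNIV. q x y)"

(* E^{q}[log (r(X|Y) / q_X(X))], conventions 0 log(.) = 0, log 0 = -\<infinity> *)
definition exp_log_ratio :: "('x::finite \<Rightarrow> 'y::finite \<Rightarrow> real) \<Rightarrow> ('y \<Rightarrow> 'x \<Rightarrow> real) \<Rightarrow> ereal" where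
  "exp_log_ratio q r =
     (if \<exists>x y. q x y > 0 \<and> r y x = 0 then -\<infinity>
      else ereal (\<Sum>(x, y)\<in>{(x, y). q x y > 0}. q x y * ln (r y x / marg_X q x)))"

definition F_S3 :: "real \<Rightarrow> ('x::finite \<Rightarrow> real) \<Rightarrow> ('x \<Rightarrow> 'y::finite \<Rightarrow> real)
                     \<Rightarrow> ('x \<Rightarrow> 'y \<Rightarrow> real) \<Rightarrow> ('y \<Rightarrow> 'x \<Rightarrow> real) \<Rightarrow> ereal" where
  "F_S3 \<alpha> p W q r =
     ereal (\<alpha> / (1 - \<alpha>)) * KL (\<lambda>(x, y). q x y) (\<lambda>(x, y). marg_X q x * W x y)
     + exp_log_ratio q r
     + ereal (1 / (1 - \<alpha>)) * KL (marg_X q) p"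

definition is_max_of :: "('a \<Rightarrow> ereal) \<Rightarrow> 'a set \<Rightarrow> ereal \<Rightarrow> bool" where
  "is_max_of f A v \<longleftrightarrow> (\<forall>a\<in>A. f a \<le> v) \<and> (\<exists>a\<in>A. f a = v)"

end

theory Submission
  imports Defs
begin

text \<open>
  Put \<open>m(y) = \<Sum>\<^sub>x p(x) W(y|x)^\<alpha>\<close> and \<open>T = \<Sum>\<^sub>y m(y)^(1/\<alpha>)\<close>. Hoelder's inequality (reversed
  when \<open>\<alpha> < 1\<close>) bounds \<open>D\<^sub>\<alpha>(p W \<parallel> p q\<^sub>Y)\<close> from below by \<open>\<alpha>/(\<alpha>-1) log T\<close>, with equality
  for \<open>q\<^sub>Y \<propto> m^(1/\<alpha>)\<close>; this is the closed form of Sibson's information. Applied for each \<open>y\<close>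
  to the sum defining \<open>F\<^sup>S\<^sup>1\<close>, the same inequality gives \<open>F\<^sup>S\<^sup>1(p, r) \<le> \<alpha>/(\<alpha>-1) log T\<close>, with
  equality for \<open>r(x|y) \<propto> p(x) W(y|x)^\<alpha>\<close>. The \<open>\<alpha>\<close>-tilt maps reverse channels onto reverse
  channels (the \<open>1/\<alpha>\<close>-tilt is a right inverse), so \<open>F\<^sup>S\<^sup>2\<close> has the same maximum.

  For \<open>\<alpha> > 1\<close> the marginal of \<open>q\<close> cancels from \<open>F\<^sup>S\<^sup>3\<close>, which becomes \<open>\<alpha>/(\<alpha>-1)\<close> times
  \<open>\<Sum> q log (f\<^sub>r / q)\<close>, where \<open>f\<^sub>r\<close> is the summand of \<open>F\<^sup>S\<^sup>1(p, r)\<close>. Gibbs' inequality bounds this by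
  \<open>F\<^sup>S\<^sup>1(p, r)\<close>, with equality for \<open>q \<propto> f\<^sub>r\<close>. For fixed \<open>q\<close> only the term \<open>E\<^sup>q[log r(X|Y)]\<close>
  depends on \<open>r\<close>, and Gibbs' inequality again shows that it is maximal at the conditional
  distribution of \<open>X\<close> given \<open>Y\<close> under \<open>q\<close>.
\<close>

section \<open>Hoelder and Gibbs inequalities\<close>

lemma Youngs_inequality_0_nonneg:
  fixes a b \<theta> :: real
  assumes "0 \<le> a" "0 \<le> b" "0 < \<theta>" "\<theta> < 1"
  shows "a powr \<theta> * b powr (1 - \<theta>) \<le> \<theta> * a + (1 - \<theta>) * b"
proof (cases "a = 0 \<or> b = 0")
  case True
  then show ?thesis using assms by auto
next
  case False
  then show ?thesis using assms Youngs_inequality_0[of \<theta> "1 - \<theta>" a b] by auto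
qed

lemma Holder_inequality_sum:
  fixes a b :: "'i \<Rightarrow> real" and \<theta> :: real
  assumes "finite I" "\<And>i. i \<in> I \<Longrightarrow> 0 \<le> a i" "\<And>i. i \<in> I \<Longrightarrow> 0 \<le> b i"
    and "0 < \<theta>" "\<theta> < 1"
  shows "(\<Sum>i\<in>I. a i powr \<theta> * b i powr (1 - \<theta>)) \<le> sum a I powr \<theta> * sum b I powr (1 - \<theta>)"
proof -
  define A B where "A = sum a I" and "B = sum b I"
  have "0 \<le> A" "0 \<le> B" unfolding A_def B_def using assms by (auto intro: sum_nonneg)
  show ?thesis
  proof (cases "A = 0 \<or> B = 0")
    case True
    then have "\<forall>i\<in>I. a i = 0 \<or> b i = 0"
      using assms sum_nonneg_eq_0_iff[of I a] sum_nonneg_eq_0_iff[of I b] unfolding A_def B_def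
      by auto
    then have "(\<Sum>i\<in>I. a i powr \<theta> * b i powr (1 - \<theta>)) = 0" by (intro sum.neutral) auto
    then show ?thesis by simp
  next
    case False
    with \<open>0 \<le> A\<close> \<open>0 \<le> B\<close> have "0 < A" "0 < B" by auto
    \<comment> \<open>Young's inequality applied to the normalised sequences \<open>a/A\<close> and \<open>b/B\<close>\<close>
    have "(\<Sum>i\<in>I. a i powr \<theta> * b i powr (1 - \<theta>)) =
          (\<Sum>i\<in>I. A powr \<theta> * B powr (1 - \<theta>) * ((a i / A) powr \<theta> * (b i / B) powr (1 - \<theta>)))"
      using \<open>0 < A\<close> \<open>0 < B\<close> by (intro sum.cong) (auto simp: powr_divide)
    also have "\<dots> \<le> (\<Sum>i\<in>I. A powr \<theta> * B powr (1 - \<theta>) * (\<theta> * (a i / A) + (1 - \<theta>) * (b i / B)))"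
      using assms \<open>0 < A\<close> \<open>0 < B\<close>
      by (intro sum_mono mult_left_mono Youngs_inequality_0_nonneg) auto
    also have "\<dots> = A powr \<theta> * B powr (1 - \<theta>) * (\<theta> * (sum a I / A) + (1 - \<theta>) * (sum b I / B))"
      by (simp add: sum.distrib sum_divide_distrib[symmetric] flip: sum_distrib_left)
    also have "\<dots> = A powr \<theta> * B powr (1 - \<theta>)"
      using \<open>0 < A\<close> \<open>0 < B\<close> unfolding A_def B_def by simp
    finally show ?thesis unfolding A_def B_def .
  qed
qed

lemma reverse_Holder_inequality_sum:
  fixes a b :: "'i \<Rightarrow> real" and \<alpha> :: real
  assumes "finite I" "\<And>i. i \<in> I \<Longrightarrow> 0 \<le> a i" "\<And>i. i \<in> I \<Longrightarrow> 0 \<le> b i"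
    and "\<And>i. i \<in> I \<Longrightarrow> 0 < a i \<Longrightarrow> 0 < b i" "0 < sum b I" "0 < \<alpha>" "\<alpha> < 1"
  shows "sum a I powr (1/\<alpha>) * sum b I powr (1 - 1/\<alpha>)
       \<le> (\<Sum>i\<in>I. a i powr (1/\<alpha>) * b i powr (1 - 1/\<alpha>))"
proof -
  define c where "c i = a i powr (1/\<alpha>) * b i powr (1 - 1/\<alpha>)" for i
  define A B C where "A = sum a I" and "B = sum b I" and "C = sum c I"
  have "0 \<le> C" unfolding C_def c_def by (intro sum_nonneg) auto
  have a_eq: "a i = c i powr \<alpha> * b i powr (1 - \<alpha>)" if "i \<in> I" for i
  proof (cases "a i = 0")
    case True
    then show ?thesis by (simp add: c_def)
  next
    case False
    with assms that have "0 < a i" "0 < b i" by force+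
    then have "c i powr \<alpha> * b i powr (1 - \<alpha>) = a i powr (1/\<alpha> * \<alpha>) * b i powr ((1 - 1/\<alpha>) * \<alpha> + (1 - \<alpha>))"
      unfolding c_def by (simp add: powr_mult powr_powr powr_add)
    also have "\<dots> = a i" using assms \<open>0 < a i\<close> \<open>0 < b i\<close> by (simp add: field_simps)
    finally show ?thesis by simp
  qed
  \<comment> \<open>Holder with exponent \<open>\<alpha>\<close> applied to \<open>c\<close> and \<open>b\<close>, then raised to the power \<open>1/\<alpha>\<close>\<close>
  have "A = (\<Sum>i\<in>I. c i powr \<alpha> * b i powr (1 - \<alpha>))"
    unfolding A_def using a_eq by simp
  also have "\<dots> \<le> C powr \<alpha> * B powr (1 - \<alpha>)"
    unfolding B_def C_def using assms by (intro Holder_inequality_sum) (auto simp: c_def)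
  finally have "A \<le> C powr \<alpha> * B powr (1 - \<alpha>)" .
  then have "A powr (1/\<alpha>) \<le> (C powr \<alpha> * B powr (1 - \<alpha>)) powr (1/\<alpha>)"
    using assms unfolding A_def by (intro powr_mono2) (auto intro: sum_nonneg)
  also have "\<dots> = C * B powr ((1 - \<alpha>) / \<alpha>)"
    using \<open>0 \<le> C\<close> assms by (simp add: powr_mult powr_powr)
  finally have "A powr (1/\<alpha>) * B powr (1 - 1/\<alpha>) \<le> C * B powr ((1 - \<alpha>) / \<alpha>) * B powr (1 - 1/\<alpha>)"
    by (intro mult_right_mono) auto
  also have "\<dots> = C * B powr ((1 - \<alpha>) / \<alpha> + (1 - 1/\<alpha>))" by (simp add: powr_add)
  also have "(1 - \<alpha>) / \<alpha> + (1 - 1/\<alpha>) = 0" using assms by (simp add: field_simps)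
  finally show ?thesis using assms unfolding A_def B_def C_def c_def by simp
qed

lemma Gibbs_inequality:
  fixes q f :: "'i \<Rightarrow> real"
  assumes "finite I" "\<And>i. i \<in> I \<Longrightarrow> 0 \<le> q i" "sum q I = 1"
    and "\<And>i. i \<in> I \<Longrightarrow> 0 \<le> f i" "\<And>i. i \<in> I \<Longrightarrow> 0 < q i \<Longrightarrow> 0 < f i"
  shows "(\<Sum>i\<in>I. q i * ln (f i / q i)) \<le> ln (sum f I)"
proof -
  define S where "S = sum f I"
  from \<open>sum q I = 1\<close> have "sum q I \<noteq> 0" by simp
  then obtain j where "j \<in> I" "q j \<noteq> 0" by (rule sum.not_neutral_contains_not_neutral)
  with assms have "0 < f j" by (simp add: order_less_le)
  also have "f j \<le> S" unfolding S_def using assms \<open>j \<in> I\<close> by (intro member_le_sum) auto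
  finally have "0 < S" .
  \<comment> \<open>\<open>ln t \<le> t - 1\<close> at \<open>t = f i / (q i * S)\<close>\<close>
  have pointwise: "q i * ln (f i / q i) \<le> f i / S - q i + q i * ln S" if "i \<in> I" for i
  proof (cases "q i = 0")
    case True
    then show ?thesis using assms that \<open>0 < S\<close> by simp
  next
    case False
    with assms that have "0 < q i" "0 < f i" by (auto simp: order_less_le)
    then have "ln (f i / (q i * S)) \<le> f i / (q i * S) - 1"
      using \<open>0 < S\<close> by (intro ln_le_minus_one) simp
    moreover have "ln (f i / q i) = ln (f i / (q i * S)) + ln S"
      using \<open>0 < q i\<close> \<open>0 < f i\<close> \<open>0 < S\<close> by (simp add: ln_div ln_mult)
    ultimately have "q i * ln (f i / q i) \<le> q i * (f i / (q i * S) - 1 + ln S)"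
      using \<open>0 < q i\<close> by (intro mult_left_mono) auto
    also have "\<dots> = f i / S - q i + q i * ln S" using \<open>0 < q i\<close> by (simp add: field_simps)
    finally show ?thesis .
  qed
  have "(\<Sum>i\<in>I. q i * ln (f i / q i)) \<le> (\<Sum>i\<in>I. f i / S - q i + q i * ln S)"
    by (intro sum_mono pointwise)
  also have "\<dots> = S / S - sum q I + sum q I * ln S"
    unfolding S_def by (simp add: sum.distrib sum_subtractf sum_divide_distrib[symmetric] sum_distrib_right)
  also have "\<dots> = ln S" using \<open>0 < S\<close> assms by simp
  finally show ?thesis unfolding S_def .
qed

section \<open>Finite joint distributions and reverse channels\<close>

lemma sum_UNIV_prod:
  "(\<Sum>z\<in>UNIV. f z) = (\<Sum>x\<in>UNIV. \<Sum>y\<in>UNIV. f (x, y))"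
  for f :: "'a::finite \<times> 'b::finite \<Rightarrow> 'c::comm_monoid_add"
  by (simp add: sum.cartesian_product flip: UNIV_Times_UNIV)

lemma is_pmf_pairs_iff:
  "is_pmf (\<lambda>(x, y). q x y) \<longleftrightarrow> (\<forall>x y. 0 \<le> q x y) \<and> (\<Sum>x\<in>UNIV. \<Sum>y\<in>UNIV. q x y) = 1"
  for q :: "'x::finite \<Rightarrow> 'y::finite \<Rightarrow> real"
  unfolding is_pmf_def sum_UNIV_prod by auto

lemma is_pmf_ex_pos:
  assumes "is_pmf P"
  obtains z where "0 < P z"
proof -
  have "sum P UNIV \<noteq> 0" using assms by (simp add: is_pmf_def)
  then obtain z where "P z \<noteq> 0" by (rule sum.not_neutral_contains_not_neutral)
  moreover have "0 \<le> P z" using assms by (simp add: is_pmf_def)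
  ultimately show thesis using that[of z] by simp
qed

lemma KL_eq_sum:
  fixes P Q :: "'a::finite \<Rightarrow> real"
  assumes "\<And>z. 0 \<le> P z" "\<And>z. 0 < P z \<Longrightarrow> Q z \<noteq> 0"
  shows "KL P Q = ereal (\<Sum>z\<in>UNIV. P z * ln (P z / Q z))"
proof -
  have "(\<Sum>z\<in>{z. 0 < P z}. P z * ln (P z / Q z)) = (\<Sum>z\<in>UNIV. P z * ln (P z / Q z))"
    using assms(1) by (intro sum.mono_neutral_left) (auto simp: order_less_le)
  then show ?thesis unfolding KL_def using assms(2) by auto
qed

lemma exp_log_ratio_eq_sum:
  assumes "\<And>x y. 0 \<le> q x y" "\<And>x y. 0 < q x y \<Longrightarrow> r y x \<noteq> 0"
  shows "exp_log_ratio q r = ereal (\<Sum>x\<in>UNIV. \<Sum>y\<in>UNIV. q x y * ln (r y x / marg_X q x))"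
proof -
  have "(\<Sum>(x, y)\<in>{(x, y). 0 < q x y}. q x y * ln (r y x / marg_X q x))
      = (\<Sum>z\<in>UNIV. (\<lambda>(x, y). q x y * ln (r y x / marg_X q x)) z)"
    using assms(1) by (intro sum.mono_neutral_left) (auto simp: order_less_le)
  then show ?thesis unfolding exp_log_ratio_def sum_UNIV_prod using assms(2) by auto
qed

lemma marg_X_pos:
  assumes "\<And>x y. 0 \<le> q x y" "0 < q x y"
  shows "0 < marg_X q x"
proof -
  have "q x y \<le> marg_X q x" unfolding marg_X_def using assms(1) by (intro member_le_sum) auto
  with assms(2) show ?thesis by linarith
qed

lemma KL_joint_eq_sum:
  assumes "\<And>x y. 0 \<le> q x y" "\<And>x y. 0 < q x y \<Longrightarrow> W x y \<noteq> 0"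
  shows "KL (\<lambda>(x, y). q x y) (\<lambda>(x, y). marg_X q x * W x y)
       = ereal (\<Sum>x\<in>UNIV. \<Sum>y\<in>UNIV. q x y * ln (q x y / (marg_X q x * W x y)))"
proof -
  have "marg_X q x * W x y \<noteq> 0" if "0 < q x y" for x y
    using assms(2)[OF that] marg_X_pos[of q, OF assms(1) that] by simp
  with assms(1) show ?thesis by (subst KL_eq_sum) (simp_all add: case_prod_beta sum_UNIV_prod)
qed

lemma KL_marg_X_eq_sum:
  assumes "\<And>x y. 0 \<le> q x y" "\<And>x y. 0 < q x y \<Longrightarrow> p x \<noteq> 0"
  shows "KL (marg_X q) p = ereal (\<Sum>x\<in>UNIV. \<Sum>y\<in>UNIV. q x y * ln (marg_X q x / p x))"
proof -
  have "p x \<noteq> 0" if "0 < marg_X q x" for x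
  proof -
    from that have "marg_X q x \<noteq> 0" by simp
    then obtain y where "q x y \<noteq> 0"
      unfolding marg_X_def by (rule sum.not_neutral_contains_not_neutral)
    with assms show ?thesis by (simp add: order_less_le)
  qed
  then have "KL (marg_X q) p = ereal (\<Sum>x\<in>UNIV. marg_X q x * ln (marg_X q x / p x))"
    using assms(1) by (intro KL_eq_sum) (auto simp: marg_X_def intro: sum_nonneg)
  then show ?thesis by (simp add: marg_X_def[of q] sum_distrib_right)
qed

lemma reverse_channelsD:
  assumes "r \<in> reverse_channels"
  shows "0 \<le> r y x" and "(\<Sum>x\<in>UNIV. r y x) = 1"
  using assms by (auto simp: reverse_channels_def is_pmf_def)

lemma reverse_channelsI:
  "(\<And>y x. 0 \<le> r y x) \<Longrightarrow> (\<And>y. (\<Sum>x\<in>UNIV. r y x) = 1) \<Longrightarrow> r \<in> reverse_channels"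
  by (auto simp: reverse_channels_def is_pmf_def)

lemma sum_powr_reverse_channel_pos:
  assumes "r \<in> reverse_channels"
  shows "0 < (\<Sum>x\<in>UNIV. r y x powr c)"
proof -
  obtain x where "0 < r y x"
    using assms unfolding reverse_channels_def by (blast elim: is_pmf_ex_pos)
  then have "0 < r y x powr c" by simp
  also have "\<dots> \<le> (\<Sum>x\<in>UNIV. r y x powr c)" by (intro member_le_sum) auto
  finally show ?thesis .
qed

lemma tilt_reverse_channel:
  assumes "r \<in> reverse_channels"
  shows "tilt \<alpha> r \<in> reverse_channels"
proof (rule reverse_channelsI)
  fix y
  have "0 < (\<Sum>x\<in>UNIV. r y x powr \<alpha>)" by (rule sum_powr_reverse_channel_pos[OF assms])
  then show "0 \<le> tilt \<alpha> r y x" "(\<Sum>x\<in>UNIV. tilt \<alpha> r y x) = 1" for x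
    by (simp_all add: tilt_def sum_divide_distrib[symmetric])
qed

lemma tilt_tilt_inverse:
  assumes "0 < \<alpha>" "r \<in> reverse_channels"
  shows "tilt \<alpha> (tilt (1/\<alpha>) r) = r"
proof (intro ext)
  fix y x
  define Z where "Z = (\<Sum>x'\<in>UNIV. r y x' powr (1/\<alpha>))"
  have "0 < Z" unfolding Z_def by (rule sum_powr_reverse_channel_pos[OF assms(2)])
  have tilt_powr: "tilt (1/\<alpha>) r y x' powr \<alpha> = r y x' / Z powr \<alpha>" for x'
    unfolding tilt_def Z_def[symmetric] using assms reverse_channelsD(1)[OF assms(2), of y x']
    by (simp add: powr_divide powr_powr)
  have "tilt \<alpha> (tilt (1/\<alpha>) r) y x = (r y x / Z powr \<alpha>) / (\<Sum>x'\<in>UNIV. r y x' / Z powr \<alpha>)"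
    unfolding tilt_def[of \<alpha>] tilt_powr ..
  also have "\<dots> = r y x"
    using \<open>0 < Z\<close> reverse_channelsD(2)[OF assms(2), of y] by (simp add: sum_divide_distrib[symmetric])
  finally show "tilt \<alpha> (tilt (1/\<alpha>) r) y x = r y x" .
qed

definition posterior :: "('x::finite \<Rightarrow> 'y::finite \<Rightarrow> real) \<Rightarrow> 'y \<Rightarrow> 'x \<Rightarrow> real" where
  "posterior q y x =
     (if 0 < (\<Sum>x'\<in>UNIV. q x' y) then q x y / (\<Sum>x'\<in>UNIV. q x' y) else 1 / real CARD('x))"

lemma posterior_reverse_channel:
  assumes "\<And>x y. 0 \<le> q x y"
  shows "posterior q \<in> reverse_channels"
proof (rule reverse_channelsI)
  show "0 \<le> posterior q y x" for y x unfolding posterior_def using assms by simp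
  show "(\<Sum>x\<in>UNIV. posterior q y x) = 1" for y
    unfolding posterior_def
    by (cases "0 < (\<Sum>x'\<in>UNIV. q x' y)") (simp_all add: sum_divide_distrib[symmetric])
qed

lemma posterior_eq:
  assumes "\<And>x y. 0 \<le> q x y" "0 < q x y"
  shows "0 < (\<Sum>x'\<in>UNIV. q x' y)" and "posterior q y x = q x y / (\<Sum>x'\<in>UNIV. q x' y)"
proof -
  have "q x y \<le> (\<Sum>x'\<in>UNIV. q x' y)" using assms(1) by (intro member_le_sum) auto
  with assms(2) show "0 < (\<Sum>x'\<in>UNIV. q x' y)" by linarith
  then show "posterior q y x = q x y / (\<Sum>x'\<in>UNIV. q x' y)" by (simp add: posterior_def)
qed

lemma sum_ln_ratio_le_posterior:
  assumes q: "is_pmf (\<lambda>(x, y). q x y)" and r: "r \<in> reverse_channels"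
    and supp: "\<And>x y. 0 < q x y \<Longrightarrow> 0 < r y x"
  shows "(\<Sum>x\<in>UNIV. \<Sum>y\<in>UNIV. q x y * ln (r y x / marg_X q x))
       \<le> (\<Sum>x\<in>UNIV. \<Sum>y\<in>UNIV. q x y * ln (posterior q y x / marg_X q x))"
proof -
  have q0: "\<And>x y. 0 \<le> q x y" and q1: "(\<Sum>x\<in>UNIV. \<Sum>y\<in>UNIV. q x y) = 1"
    using q unfolding is_pmf_pairs_iff by auto
  define qY where "qY y = (\<Sum>x\<in>UNIV. q x y)" for y
  have qY_nonneg: "0 \<le> qY y" for y unfolding qY_def using q0 by (intro sum_nonneg) auto
  have "(\<Sum>x\<in>UNIV. \<Sum>y\<in>UNIV. q x y * ln (r y x / marg_X q x))
      - (\<Sum>x\<in>UNIV. \<Sum>y\<in>UNIV. q x y * ln (posterior q y x / marg_X q x))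
      = (\<Sum>x\<in>UNIV. \<Sum>y\<in>UNIV. q x y * ln (r y x * qY y / q x y))"
    unfolding sum_subtractf[symmetric] right_diff_distrib[symmetric]
  proof (intro sum.cong refl)
    fix x y
    show "q x y * (ln (r y x / marg_X q x) - ln (posterior q y x / marg_X q x))
        = q x y * ln (r y x * qY y / q x y)"
    proof (cases "q x y = 0")
      case False
      with q0[of x y] have "0 < q x y" by simp
      with supp[OF this] marg_X_pos[of q, OF q0 this] posterior_eq[of q, OF q0 this] show ?thesis
        by (simp add: qY_def ln_div ln_mult)
    qed simp
  qed
  \<comment> \<open>Gibbs against the weights \<open>r(x|y) q\<^sub>Y(y)\<close>, which sum to one\<close>
  also have "\<dots> \<le> ln (\<Sum>x\<in>UNIV. \<Sum>y\<in>UNIV. r y x * qY y)"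
  proof -
    have "(\<Sum>z\<in>UNIV. (\<lambda>(x, y). q x y) z * ln ((\<lambda>(x, y). r y x * qY y) z / (\<lambda>(x, y). q x y) z))
        \<le> ln (\<Sum>z\<in>UNIV. (\<lambda>(x, y). r y x * qY y) z)"
      using q0 q1 supp reverse_channelsD(1)[OF r] qY_nonneg posterior_eq(1)[of q, OF q0]
      by (intro Gibbs_inequality) (auto simp: sum_UNIV_prod qY_def)
    then show ?thesis by (simp add: sum_UNIV_prod)
  qed
  also have "(\<Sum>x\<in>UNIV. \<Sum>y\<in>UNIV. r y x * qY y) = (\<Sum>y\<in>UNIV. qY y)"
    using reverse_channelsD(2)[OF r] by (subst sum.swap) (simp flip: sum_distrib_right)
  also have "\<dots> = 1" unfolding qY_def using q1 by (subst sum.swap) simp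
  finally show ?thesis by simp
qed

lemma exp_log_ratio_le_posterior:
  assumes q: "is_pmf (\<lambda>(x, y). q x y)" and r: "r \<in> reverse_channels"
  shows "exp_log_ratio q r \<le> exp_log_ratio q (posterior q)"
proof (cases "\<exists>x y. 0 < q x y \<and> r y x = 0")
  case True
  then show ?thesis unfolding exp_log_ratio_def[of q r] by simp
next
  case False
  have q0: "\<And>x y. 0 \<le> q x y" using q unfolding is_pmf_pairs_iff by auto
  have supp: "0 < r y x" if "0 < q x y" for x y
    using that False reverse_channelsD(1)[OF r, of y x] by (auto simp: order_less_le)
  have "posterior q y x \<noteq> 0" if "0 < q x y" for x y
    using that posterior_eq[of q, OF q0 that] by simp
  with False q0 show ?thesis
    by (simp add: exp_log_ratio_eq_sum sum_ln_ratio_le_posterior[OF q r supp])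
qed

lemma F_S3_le_posterior:
  assumes "is_pmf (\<lambda>(x, y). q x y)" "r \<in> reverse_channels"
  shows "F_S3 \<alpha> p W q r \<le> F_S3 \<alpha> p W q (posterior q)"
  unfolding F_S3_def using exp_log_ratio_le_posterior[OF assms] by (intro add_mono order_refl)

lemma is_max_of_SUP:
  assumes "a\<^sub>0 \<in> A" "\<And>a. a \<in> A \<Longrightarrow> f a \<le> f a\<^sub>0"
  shows "is_max_of f A (SUP a\<in>A. f a)"
proof -
  have "(SUP a\<in>A. f a) = f a\<^sub>0"
    using assms by (intro antisym SUP_least SUP_upper)
  then show ?thesis unfolding is_max_of_def using assms by auto
qed

lemma is_max_of_F_S3:
  assumes "is_pmf (\<lambda>(x, y). q x y)"
  shows "is_max_of (F_S3 \<alpha> p W q) reverse_channels (SUP r\<in>reverse_channels. F_S3 \<alpha> p W q r)"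
proof (rule is_max_of_SUP)
  show "posterior q \<in> reverse_channels"
    using assms by (intro posterior_reverse_channel) (simp add: is_pmf_pairs_iff)
  show "F_S3 \<alpha> p W q r \<le> F_S3 \<alpha> p W q (posterior q)" if "r \<in> reverse_channels" for r
    using assms that by (rule F_S3_le_posterior)
qed

section \<open>Sibson's mutual information in closed form\<close>

locale sibson_setting =
  fixes \<alpha> :: real and p :: "'x::finite \<Rightarrow> real" and W :: "'x \<Rightarrow> 'y::finite \<Rightarrow> real"
  assumes alpha_pos: "0 < \<alpha>" and alpha_ne_one: "\<alpha> \<noteq> 1"
    and pmf_p: "is_pmf p" and channel_W: "is_channel W"
begin

lemma p_nonneg: "0 \<le> p x"
  using pmf_p by (simp add: is_pmf_def)

lemma W_nonneg: "0 \<le> W x y"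
  using channel_W by (simp add: is_channel_def is_pmf_def)

definition moment :: "'y \<Rightarrow> real" where
  "moment y = (\<Sum>x\<in>UNIV. p x * W x y powr \<alpha>)"

definition sibson_sum :: real where
  "sibson_sum = (\<Sum>y\<in>UNIV. moment y powr (1/\<alpha>))"

definition sibson_value :: real where
  "sibson_value = \<alpha> / (\<alpha> - 1) * ln sibson_sum"

lemma moment_nonneg: "0 \<le> moment y"
  unfolding moment_def using p_nonneg by (intro sum_nonneg) auto

lemma moment_pos_iff: "0 < moment y \<longleftrightarrow> (\<exists>x. 0 < p x \<and> 0 < W x y)"
proof
  assume "0 < moment y"
  then have "moment y \<noteq> 0" by simp
  then obtain x where "p x * W x y powr \<alpha> \<noteq> 0"
    unfolding moment_def by (rule sum.not_neutral_contains_not_neutral)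
  then show "\<exists>x. 0 < p x \<and> 0 < W x y"
    using p_nonneg[of x] W_nonneg[of x y] by (auto simp: order_less_le)
next
  assume "\<exists>x. 0 < p x \<and> 0 < W x y"
  then obtain x where "0 < p x" "0 < W x y" by blast
  then have "0 < p x * W x y powr \<alpha>" by simp
  also have "\<dots> \<le> moment y" unfolding moment_def using p_nonneg by (intro member_le_sum) auto
  finally show "0 < moment y" .
qed

lemma sibson_sum_pos: "0 < sibson_sum"
proof -
  obtain x where "0 < p x" using pmf_p by (rule is_pmf_ex_pos)
  moreover obtain y where "0 < W x y" using channel_W unfolding is_channel_def by (blast elim: is_pmf_ex_pos)
  ultimately have "0 < moment y" using moment_pos_iff by blast
  then have "0 < moment y powr (1/\<alpha>)" by simp
  also have "\<dots> \<le> sibson_sum" unfolding sibson_sum_def by (intro member_le_sum) auto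
  finally show ?thesis .
qed

definition renyi_sum :: "('y \<Rightarrow> real) \<Rightarrow> real" where
  "renyi_sum q = (\<Sum>y\<in>UNIV. q y powr (1 - \<alpha>) * moment y)"

lemma renyi_sum_nonneg: "0 \<le> renyi_sum q"
  unfolding renyi_sum_def using moment_nonneg by (intro sum_nonneg) simp

lemma renyi_div_product_eq:
  assumes "\<And>y. 0 \<le> q y"
  shows "renyi_div \<alpha> (\<lambda>(x, y). p x * W x y) (\<lambda>(x, y). p x * q y) =
    (if (1 < \<alpha> \<and> (\<exists>x y. 0 < p x \<and> 0 < W x y \<and> q y = 0)) \<or> renyi_sum q = 0 then \<infinity>
     else ereal (ln (renyi_sum q) / (\<alpha> - 1)))"
proof -
  have pointwise: "(p x * W x y) powr \<alpha> * (p x * q y) powr (1 - \<alpha>) = q y powr (1 - \<alpha>) * (p x * W x y powr \<alpha>)"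
    for x y
  proof (cases "p x = 0")
    case False
    with p_nonneg[of x] have "p x powr \<alpha> * p x powr (1 - \<alpha>) = p x" by (simp flip: powr_add)
    then show ?thesis by (simp add: powr_mult algebra_simps)
  qed simp
  have "(\<Sum>z\<in>{z. 0 < (\<lambda>(x, y). p x * W x y) z \<and> 0 < (\<lambda>(x, y). p x * q y) z}.
          (\<lambda>(x, y). p x * W x y) z powr \<alpha> * (\<lambda>(x, y). p x * q y) z powr (1 - \<alpha>))
      = (\<Sum>z\<in>UNIV. (\<lambda>(x, y). p x * W x y) z powr \<alpha> * (\<lambda>(x, y). p x * q y) z powr (1 - \<alpha>))"
  proof (intro sum.mono_neutral_left ballI)
    fix z :: "'x \<times> 'y"
    assume "z \<in> UNIV - {z. 0 < (\<lambda>(x, y). p x * W x y) z \<and> 0 < (\<lambda>(x, y). p x * q y) z}"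
    then show "(\<lambda>(x, y). p x * W x y) z powr \<alpha> * (\<lambda>(x, y). p x * q y) z powr (1 - \<alpha>) = 0"
      using p_nonneg[of "fst z"] W_nonneg[of "fst z" "snd z"] assms(1)[of "snd z"]
      by (cases z) (auto simp: order_less_le)
  qed auto
  also have "\<dots> = (\<Sum>x\<in>UNIV. \<Sum>y\<in>UNIV. q y powr (1 - \<alpha>) * (p x * W x y powr \<alpha>))"
    by (simp add: sum_UNIV_prod pointwise)
  also have "\<dots> = renyi_sum q"
    unfolding renyi_sum_def moment_def by (subst sum.swap) (simp add: sum_distrib_left)
  finally have sum_eq: "(\<Sum>z\<in>{z. 0 < (\<lambda>(x, y). p x * W x y) z \<and> 0 < (\<lambda>(x, y). p x * q y) z}.
          (\<lambda>(x, y). p x * W x y) z powr \<alpha> * (\<lambda>(x, y). p x * q y) z powr (1 - \<alpha>)) = renyi_sum q" .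
  have "(\<exists>z. 0 < (\<lambda>(x, y). p x * W x y) z \<and> (\<lambda>(x, y). p x * q y) z = 0)
      \<longleftrightarrow> (\<exists>x y. 0 < p x \<and> 0 < W x y \<and> q y = 0)"
    using p_nonneg W_nonneg by (auto simp: zero_less_mult_iff order_less_le)
  then show ?thesis unfolding renyi_div_def Let_def sum_eq by simp
qed

lemma renyi_sum_le_sibson_sum_powr:
  assumes "\<alpha> < 1" "is_pmf q"
  shows "renyi_sum q \<le> sibson_sum powr \<alpha>"
proof -
  have "renyi_sum q = (\<Sum>y\<in>UNIV. (moment y powr (1/\<alpha>)) powr \<alpha> * q y powr (1 - \<alpha>))"
    unfolding renyi_sum_def using alpha_pos moment_nonneg by (intro sum.cong) (auto simp: powr_powr)
  also have "\<dots> \<le> sibson_sum powr \<alpha> * (\<Sum>y\<in>UNIV. q y) powr (1 - \<alpha>)"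
    unfolding sibson_sum_def using assms alpha_pos by (intro Holder_inequality_sum) (auto simp: is_pmf_def)
  finally show ?thesis using assms(2) by (simp add: is_pmf_def)
qed

lemma sibson_sum_le_renyi_sum_powr:
  assumes "1 < \<alpha>" "is_pmf q" "\<And>y. 0 < moment y \<Longrightarrow> 0 < q y"
  shows "sibson_sum \<le> renyi_sum q powr (1/\<alpha>)"
proof -
  have "sibson_sum = (\<Sum>y\<in>UNIV. (q y powr (1 - \<alpha>) * moment y) powr (1/\<alpha>) * q y powr (1 - 1/\<alpha>))"
    unfolding sibson_sum_def
  proof (intro sum.cong refl)
    fix y
    show "moment y powr (1/\<alpha>) = (q y powr (1 - \<alpha>) * moment y) powr (1/\<alpha>) * q y powr (1 - 1/\<alpha>)"
    proof (cases "moment y = 0")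
      case False
      with moment_nonneg[of y] have "0 < q y" by (simp add: assms(3))
      then have "(q y powr (1 - \<alpha>) * moment y) powr (1/\<alpha>) * q y powr (1 - 1/\<alpha>)
          = moment y powr (1/\<alpha>) * q y powr ((1 - \<alpha>) / \<alpha> + (1 - 1/\<alpha>))"
        by (simp add: powr_mult powr_powr powr_add)
      also have "(1 - \<alpha>) / \<alpha> + (1 - 1/\<alpha>) = 0" using alpha_pos by (simp add: field_simps)
      finally show ?thesis using \<open>0 < q y\<close> by simp
    qed simp
  qed
  also have "\<dots> \<le> renyi_sum q powr (1/\<alpha>) * (\<Sum>y\<in>UNIV. q y) powr (1 - 1/\<alpha>)"
    unfolding renyi_sum_def using assms moment_nonneg
    by (intro Holder_inequality_sum) (auto simp: is_pmf_def)
  finally show ?thesis using assms(2) by (simp add: is_pmf_def)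
qed

lemma sibson_value_le_renyi_div:
  assumes "is_pmf q"
  shows "ereal sibson_value \<le> renyi_div \<alpha> (\<lambda>(x, y). p x * W x y) (\<lambda>(x, y). p x * q y)"
proof -
  have q0: "\<And>y. 0 \<le> q y" using assms by (simp add: is_pmf_def)
  show ?thesis
  proof (cases "(1 < \<alpha> \<and> (\<exists>x y. 0 < p x \<and> 0 < W x y \<and> q y = 0)) \<or> renyi_sum q = 0")
    case True
    then show ?thesis by (simp add: renyi_div_product_eq[OF q0])
  next
    case False
    note finite = this
    with renyi_sum_nonneg[of q] have "0 < renyi_sum q" by simp
    have "\<alpha> * ln sibson_sum / (\<alpha> - 1) \<le> ln (renyi_sum q) / (\<alpha> - 1)"
    proof (cases "\<alpha> < 1")
      case True
      with assms have "ln (renyi_sum q) \<le> ln (sibson_sum powr \<alpha>)"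
        using \<open>0 < renyi_sum q\<close> sibson_sum_pos
        by (subst ln_le_cancel_iff) (auto intro: renyi_sum_le_sibson_sum_powr)
      then show ?thesis using True sibson_sum_pos by (intro divide_right_mono_neg) (auto simp: ln_powr)
    next
      case False
      with alpha_ne_one have "1 < \<alpha>" by simp
      with finite have "0 < q y" if "0 < moment y" for y
        using that q0[of y] moment_pos_iff by (auto simp: order_less_le)
      with \<open>1 < \<alpha>\<close> assms have "ln sibson_sum \<le> ln (renyi_sum q powr (1/\<alpha>))"
        using \<open>0 < renyi_sum q\<close> sibson_sum_pos
        by (subst ln_le_cancel_iff) (auto intro: sibson_sum_le_renyi_sum_powr)
      then have "\<alpha> * ln sibson_sum \<le> ln (renyi_sum q)"
        using \<open>0 < renyi_sum q\<close> alpha_pos by (simp add: ln_powr field_simps)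
      then show ?thesis using \<open>1 < \<alpha>\<close> by (intro divide_right_mono) auto
    qed
    then show ?thesis using finite by (simp add: renyi_div_product_eq[OF q0] sibson_value_def)
  qed
qed

definition optimal_output :: "'y \<Rightarrow> real" where
  "optimal_output y = moment y powr (1/\<alpha>) / sibson_sum"

lemma optimal_output_pmf: "is_pmf optimal_output"
  unfolding is_pmf_def optimal_output_def using sibson_sum_pos
  by (simp add: sum_divide_distrib[symmetric] flip: sibson_sum_def)

lemma renyi_div_optimal_output:
  "renyi_div \<alpha> (\<lambda>(x, y). p x * W x y) (\<lambda>(x, y). p x * optimal_output y) = ereal sibson_value"
proof -
  have "renyi_sum optimal_output = (\<Sum>y\<in>UNIV. sibson_sum powr (\<alpha> - 1) * moment y powr (1/\<alpha>))"
    unfolding renyi_sum_def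
  proof (intro sum.cong refl)
    fix y
    show "optimal_output y powr (1 - \<alpha>) * moment y = sibson_sum powr (\<alpha> - 1) * moment y powr (1/\<alpha>)"
    proof (cases "moment y = 0")
      case False
      with moment_nonneg[of y] have "0 < moment y" by simp
      then have "optimal_output y powr (1 - \<alpha>) * moment y
          = moment y powr ((1 - \<alpha>) / \<alpha> + 1) / sibson_sum powr (1 - \<alpha>)"
        unfolding optimal_output_def using sibson_sum_pos by (simp add: powr_divide powr_powr powr_add)
      also have "(1 - \<alpha>) / \<alpha> + 1 = 1/\<alpha>" using alpha_pos by (simp add: field_simps)
      also have "moment y powr (1/\<alpha>) / sibson_sum powr (1 - \<alpha>)
          = sibson_sum powr (\<alpha> - 1) * moment y powr (1/\<alpha>)"
        using sibson_sum_pos by (simp add: powr_diff)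
      finally show ?thesis .
    qed (simp add: optimal_output_def)
  qed
  also have "\<dots> = sibson_sum powr (\<alpha> - 1) * sibson_sum"
    unfolding sibson_sum_def by (simp add: sum_distrib_left)
  also have "\<dots> = sibson_sum powr \<alpha>" using sibson_sum_pos by (simp add: powr_diff)
  finally have s_eq: "renyi_sum optimal_output = sibson_sum powr \<alpha>" .
  have "0 < optimal_output y" if "0 < p x" "0 < W x y" for x y
  proof -
    from that have "0 < moment y" using moment_pos_iff by blast
    then show ?thesis using sibson_sum_pos by (simp add: optimal_output_def)
  qed
  then have "\<not> (\<exists>x y. 0 < p x \<and> 0 < W x y \<and> optimal_output y = 0)" by fastforce
  moreover have "\<And>y. 0 \<le> optimal_output y" using optimal_output_pmf by (simp add: is_pmf_def)
  ultimately show ?thesis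
    using sibson_sum_pos by (simp add: renyi_div_product_eq s_eq ln_powr sibson_value_def)
qed

lemma sibson_MI_eq: "sibson_MI \<alpha> p W = ereal sibson_value"
  unfolding sibson_MI_def
proof (rule antisym)
  show "(INF q\<in>{q. is_pmf q}. renyi_div \<alpha> (\<lambda>(x, y). p x * W x y) (\<lambda>(x, y). p x * q y))
      \<le> ereal sibson_value"
    using optimal_output_pmf by (auto intro: INF_lower2 simp: renyi_div_optimal_output)
  show "ereal sibson_value
      \<le> (INF q\<in>{q. is_pmf q}. renyi_div \<alpha> (\<lambda>(x, y). p x * W x y) (\<lambda>(x, y). p x * q y))"
    by (auto intro: INF_greatest sibson_value_le_renyi_div)
qed

section \<open>The variational characterisations\<close>

definition F_S1_term :: "('y \<Rightarrow> 'x \<Rightarrow> real) \<Rightarrow> 'x \<Rightarrow> 'y \<Rightarrow> real" where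
  "F_S1_term r x y = p x powr (1/\<alpha>) * W x y * r y x powr (1 - 1/\<alpha>)"

definition F_S1_sum :: "('y \<Rightarrow> 'x \<Rightarrow> real) \<Rightarrow> real" where
  "F_S1_sum r = (\<Sum>x\<in>UNIV. \<Sum>y\<in>UNIV. F_S1_term r x y)"

lemma F_S1_term_nonneg: "0 \<le> F_S1_term r x y"
  unfolding F_S1_term_def using W_nonneg by simp

lemma F_S1_term_eq: "F_S1_term r x y = (p x * W x y powr \<alpha>) powr (1/\<alpha>) * r y x powr (1 - 1/\<alpha>)"
  unfolding F_S1_term_def using alpha_pos W_nonneg[of x y] by (simp add: powr_mult powr_powr)

lemma F_S1_eq:
  assumes "\<And>y x. 0 \<le> r y x"
  shows "F_S1 \<alpha> p W r =
    (if (\<alpha> < 1 \<and> (\<exists>x y. 0 < p x \<and> 0 < W x y \<and> r y x = 0)) \<or> F_S1_sum r = 0 then -\<infinity>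
     else ereal (\<alpha> / (\<alpha> - 1) * ln (F_S1_sum r)))"
proof -
  have "(\<Sum>(x, y)\<in>{(x, y). (x, y) \<in> {(x, y). 0 < p x \<and> 0 < W x y} \<and> 0 < r y x}.
          p x powr (1 / \<alpha>) * W x y * r y x powr (1 - 1 / \<alpha>))
      = (\<Sum>z\<in>UNIV. (\<lambda>(x, y). F_S1_term r x y) z)"
    unfolding F_S1_term_def
  proof (intro sum.mono_neutral_left ballI)
    fix z :: "'x \<times> 'y"
    assume "z \<in> UNIV - {(x, y). (x, y) \<in> {(x, y). 0 < p x \<and> 0 < W x y} \<and> 0 < r y x}"
    then show "(\<lambda>(x, y). p x powr (1 / \<alpha>) * W x y * r y x powr (1 - 1 / \<alpha>)) z = 0"
      using p_nonneg[of "fst z"] W_nonneg[of "fst z" "snd z"] assms[of "snd z" "fst z"]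
      by (cases z) (auto simp: order_less_le)
  qed auto
  also have "\<dots> = F_S1_sum r" by (simp add: sum_UNIV_prod F_S1_sum_def)
  finally show ?thesis unfolding F_S1_def Let_def by auto
qed

lemma sum_F_S1_term_le:
  assumes "1 < \<alpha>" "r \<in> reverse_channels"
  shows "(\<Sum>x\<in>UNIV. F_S1_term r x y) \<le> moment y powr (1/\<alpha>)"
proof -
  have "(\<Sum>x\<in>UNIV. F_S1_term r x y)
      \<le> moment y powr (1/\<alpha>) * (\<Sum>x\<in>UNIV. r y x) powr (1 - 1/\<alpha>)"
    unfolding F_S1_term_eq moment_def using assms p_nonneg reverse_channelsD(1)[OF assms(2)]
    by (intro Holder_inequality_sum) auto
  then show ?thesis using reverse_channelsD(2)[OF assms(2)] by simp
qed

lemma sum_F_S1_term_ge: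
  assumes "\<alpha> < 1" "r \<in> reverse_channels" "\<And>x. 0 < p x \<Longrightarrow> 0 < W x y \<Longrightarrow> 0 < r y x"
  shows "moment y powr (1/\<alpha>) \<le> (\<Sum>x\<in>UNIV. F_S1_term r x y)"
proof -
  have pos: "0 < r y x" if "0 < p x * W x y powr \<alpha>" for x
    using that assms(3) p_nonneg[of x] W_nonneg[of x y] by (auto simp: zero_less_mult_iff)
  have "moment y powr (1/\<alpha>) * (\<Sum>x\<in>UNIV. r y x) powr (1 - 1/\<alpha>) \<le> (\<Sum>x\<in>UNIV. F_S1_term r x y)"
    unfolding F_S1_term_eq moment_def
    using assms alpha_pos p_nonneg reverse_channelsD[OF assms(2)] pos
    by (intro reverse_Holder_inequality_sum) auto
  then show ?thesis using reverse_channelsD(2)[OF assms(2)] by simp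
qed

lemma F_S1_le_sibson_value:
  assumes r: "r \<in> reverse_channels"
  shows "F_S1 \<alpha> p W r \<le> ereal sibson_value"
proof (cases "(\<alpha> < 1 \<and> (\<exists>x y. 0 < p x \<and> 0 < W x y \<and> r y x = 0)) \<or> F_S1_sum r = 0")
  case True
  then show ?thesis by (simp add: F_S1_eq reverse_channelsD(1)[OF r])
next
  case False
  have "0 \<le> F_S1_sum r" unfolding F_S1_sum_def by (intro sum_nonneg F_S1_term_nonneg)
  with False have "0 < F_S1_sum r" by simp
  have F_S1_sum_swap: "F_S1_sum r = (\<Sum>y\<in>UNIV. \<Sum>x\<in>UNIV. F_S1_term r x y)"
    unfolding F_S1_sum_def by (rule sum.swap)
  have "\<alpha> / (\<alpha> - 1) * ln (F_S1_sum r) \<le> \<alpha> / (\<alpha> - 1) * ln sibson_sum"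
  proof (cases "\<alpha> < 1")
    case True
    have "sibson_sum \<le> F_S1_sum r"
      unfolding sibson_sum_def F_S1_sum_swap
    proof (intro sum_mono sum_F_S1_term_ge[OF True r])
      fix y x
      assume "0 < p x" "0 < W x y"
      then show "0 < r y x"
        using False True reverse_channelsD(1)[OF r, of y x] by (auto simp: order_less_le)
    qed
    then have "ln sibson_sum \<le> ln (F_S1_sum r)" using sibson_sum_pos by simp
    moreover have "\<alpha> / (\<alpha> - 1) < 0" using True alpha_pos by (simp add: divide_pos_neg)
    ultimately show ?thesis by (intro mult_left_mono_neg) auto
  next
    case False
    with alpha_ne_one have "1 < \<alpha>" by simp
    have "F_S1_sum r \<le> sibson_sum"
      unfolding sibson_sum_def F_S1_sum_swap by (intro sum_mono sum_F_S1_term_le[OF \<open>1 < \<alpha>\<close> r])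
    then have "ln (F_S1_sum r) \<le> ln sibson_sum" using \<open>0 < F_S1_sum r\<close> by simp
    moreover have "0 < \<alpha> / (\<alpha> - 1)" using \<open>1 < \<alpha>\<close> by simp
    ultimately show ?thesis by (intro mult_left_mono) auto
  qed
  then show ?thesis
    using False by (simp add: F_S1_eq reverse_channelsD(1)[OF r] sibson_value_def)
qed

definition optimal_reverse :: "'y \<Rightarrow> 'x \<Rightarrow> real" where
  "optimal_reverse = posterior (\<lambda>x y. p x * W x y powr \<alpha>)"

lemma optimal_reverse_reverse_channel: "optimal_reverse \<in> reverse_channels"
  unfolding optimal_reverse_def using p_nonneg by (intro posterior_reverse_channel) simp

lemma optimal_reverse_eq: "0 < moment y \<Longrightarrow> optimal_reverse y x = p x * W x y powr \<alpha> / moment y"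
  unfolding optimal_reverse_def posterior_def moment_def by simp

lemma F_S1_sum_optimal_reverse: "F_S1_sum optimal_reverse = sibson_sum"
  unfolding F_S1_sum_def sibson_sum_def
proof (subst sum.swap, intro sum.cong refl)
  fix y
  show "(\<Sum>x\<in>UNIV. F_S1_term optimal_reverse x y) = moment y powr (1/\<alpha>)"
  proof (cases "moment y = 0")
    case True
    then have zero: "p x * W x y powr \<alpha> = 0" for x
      using sum_nonneg_eq_0_iff[of UNIV "\<lambda>x. p x * W x y powr \<alpha>"] p_nonneg
      unfolding moment_def by simp
    show ?thesis unfolding F_S1_term_eq zero True by simp
  next
    case False
    with moment_nonneg[of y] have "0 < moment y" by simp
    have "F_S1_term optimal_reverse x y = p x * W x y powr \<alpha> / moment y powr (1 - 1/\<alpha>)" for x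
    proof -
      define a where "a = p x * W x y powr \<alpha>"
      have "0 \<le> a" unfolding a_def using p_nonneg by simp
      have "F_S1_term optimal_reverse x y = a powr (1/\<alpha>) * a powr (1 - 1/\<alpha>) / moment y powr (1 - 1/\<alpha>)"
        unfolding F_S1_term_eq optimal_reverse_eq[OF \<open>0 < moment y\<close>] a_def[symmetric]
        using \<open>0 \<le> a\<close> \<open>0 < moment y\<close> by (simp add: powr_divide)
      also have "a powr (1/\<alpha>) * a powr (1 - 1/\<alpha>) = a"
        using \<open>0 \<le> a\<close> by (cases "a = 0") (simp_all flip: powr_add)
      finally show ?thesis unfolding a_def .
    qed
    then have "(\<Sum>x\<in>UNIV. F_S1_term optimal_reverse x y) = moment y / moment y powr (1 - 1/\<alpha>)"
      by (simp add: moment_def sum_divide_distrib)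
    also have "\<dots> = moment y powr (1/\<alpha>)"
      using \<open>0 < moment y\<close> by (simp add: powr_diff)
    finally show ?thesis .
  qed
qed

lemma F_S1_optimal_reverse: "F_S1 \<alpha> p W optimal_reverse = ereal sibson_value"
proof -
  have "0 < optimal_reverse y x" if "0 < p x" "0 < W x y" for x y
  proof -
    from that have "0 < moment y" using moment_pos_iff by blast
    with that show ?thesis by (simp add: optimal_reverse_eq)
  qed
  then have "\<not> (\<exists>x y. 0 < p x \<and> 0 < W x y \<and> optimal_reverse y x = 0)" by fastforce
  then show ?thesis
    using sibson_sum_pos reverse_channelsD(1)[OF optimal_reverse_reverse_channel]
    by (simp add: F_S1_eq F_S1_sum_optimal_reverse sibson_value_def)
qed

lemma is_max_of_F_S1: "is_max_of (F_S1 \<alpha> p W) reverse_channels (sibson_MI \<alpha> p W)"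
  unfolding is_max_of_def sibson_MI_eq
  using F_S1_le_sibson_value optimal_reverse_reverse_channel F_S1_optimal_reverse by blast

lemma is_max_of_F_S2: "is_max_of (F_S2 \<alpha> p W) reverse_channels (sibson_MI \<alpha> p W)"
proof -
  have "tilt \<alpha> (tilt (1/\<alpha>) optimal_reverse) = optimal_reverse"
    using alpha_pos optimal_reverse_reverse_channel by (rule tilt_tilt_inverse)
  moreover have "tilt (1/\<alpha>) optimal_reverse \<in> reverse_channels"
    using optimal_reverse_reverse_channel by (rule tilt_reverse_channel)
  ultimately show ?thesis
    unfolding is_max_of_def sibson_MI_eq F_S2_def
    using F_S1_le_sibson_value tilt_reverse_channel F_S1_optimal_reverse by metis
qed

lemma F_S3_integrand_eq:
  assumes "0 < a" "0 < m" "0 < p x" "0 < W x y" "0 < r y x"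
  shows "\<alpha> / (1 - \<alpha>) * ln (a / (m * W x y)) + ln (r y x / m) + 1 / (1 - \<alpha>) * ln (m / p x)
       = \<alpha> / (\<alpha> - 1) * ln (F_S1_term r x y / a)"
proof -
  have "1 - \<alpha> \<noteq> 0" "\<alpha> - 1 \<noteq> 0" using alpha_ne_one by auto
  then have coefficients: "\<alpha> / (1 - \<alpha>) * (a - (b + c)) + (d - b) + 1 / (1 - \<alpha>) * (b - e)
      = \<alpha> / (\<alpha> - 1) * ((1/\<alpha> * e + c + (1 - 1/\<alpha>) * d) - a)" for a b c d e :: real
    using alpha_pos by (simp add: divide_simps) (simp add: algebra_simps)
  from assms have logs:
    "ln (F_S1_term r x y / a) = 1/\<alpha> * ln (p x) + ln (W x y) + (1 - 1/\<alpha>) * ln (r y x) - ln a"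
    "ln (a / (m * W x y)) = ln a - (ln m + ln (W x y))"
    "ln (r y x / m) = ln (r y x) - ln m"
    "ln (m / p x) = ln m - ln (p x)"
    by (simp_all add: F_S1_term_def ln_div ln_mult ln_powr)
  show ?thesis by (simp only: logs coefficients)
qed

lemma F_S3_eq_sum:
  assumes q0: "\<And>x y. 0 \<le> q x y"
    and supp: "\<And>x y. 0 < q x y \<Longrightarrow> 0 < p x \<and> 0 < W x y \<and> 0 < r y x"
  shows "F_S3 \<alpha> p W q r
       = ereal (\<alpha> / (\<alpha> - 1) * (\<Sum>x\<in>UNIV. \<Sum>y\<in>UNIV. q x y * ln (F_S1_term r x y / q x y)))"
proof -
  have pointwise: "q x y * (\<alpha> / (1 - \<alpha>) * ln (q x y / (marg_X q x * W x y))
        + ln (r y x / marg_X q x) + 1 / (1 - \<alpha>) * ln (marg_X q x / p x))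
      = \<alpha> / (\<alpha> - 1) * (q x y * ln (F_S1_term r x y / q x y))" for x y
  proof (cases "q x y = 0")
    case False
    with q0[of x y] have "0 < q x y" by simp
    with supp have "0 < p x" "0 < W x y" "0 < r y x" by auto
    note integrand = F_S3_integrand_eq[where r = r, OF \<open>0 < q x y\<close> marg_X_pos[of q, OF q0 \<open>0 < q x y\<close>] this]
    show ?thesis unfolding integrand by (rule mult.left_commute)
  qed simp
  have W_ne: "\<And>x y. 0 < q x y \<Longrightarrow> W x y \<noteq> 0" and p_ne: "\<And>x y. 0 < q x y \<Longrightarrow> p x \<noteq> 0"
    and r_ne: "\<And>x y. 0 < q x y \<Longrightarrow> r y x \<noteq> 0"
    using supp by fastforce+
  have "F_S3 \<alpha> p W q r
      = ereal (\<alpha> / (1 - \<alpha>) * (\<Sum>x\<in>UNIV. \<Sum>y\<in>UNIV. q x y * ln (q x y / (marg_X q x * W x y)))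
        + (\<Sum>x\<in>UNIV. \<Sum>y\<in>UNIV. q x y * ln (r y x / marg_X q x))
        + 1 / (1 - \<alpha>) * (\<Sum>x\<in>UNIV. \<Sum>y\<in>UNIV. q x y * ln (marg_X q x / p x)))"
    using q0 W_ne p_ne r_ne
    by (simp add: F_S3_def KL_joint_eq_sum KL_marg_X_eq_sum exp_log_ratio_eq_sum)
  also have "\<dots> = ereal (\<Sum>x\<in>UNIV. \<Sum>y\<in>UNIV. q x y * (\<alpha> / (1 - \<alpha>) * ln (q x y / (marg_X q x * W x y))
        + ln (r y x / marg_X q x) + 1 / (1 - \<alpha>) * ln (marg_X q x / p x)))"
    by (simp add: sum_distrib_left sum.distrib algebra_simps)
  also have "\<dots> = ereal (\<alpha> / (\<alpha> - 1) * (\<Sum>x\<in>UNIV. \<Sum>y\<in>UNIV. q x y * ln (F_S1_term r x y / q x y)))"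
    unfolding pointwise sum_distrib_left ..
  finally show ?thesis .
qed

lemma F_S3_eq_minus_infinity:
  assumes "1 < \<alpha>" "\<And>x y. 0 \<le> q x y" "0 < q x y" "p x = 0 \<or> W x y = 0 \<or> r y x = 0"
  shows "F_S3 \<alpha> p W q r = -\<infinity>"
proof -
  have neg: "\<alpha> / (1 - \<alpha>) < 0" "1 / (1 - \<alpha>) < 0" using assms(1) alpha_pos by (auto simp: divide_pos_neg)
  then have not_infty: "ereal (\<alpha> / (1 - \<alpha>)) * KL P Q \<noteq> \<infinity>" "ereal (1 / (1 - \<alpha>)) * KL P' Q' \<noteq> \<infinity>"
    "exp_log_ratio q r \<noteq> \<infinity>" for P Q :: "'x \<times> 'y \<Rightarrow> real" and P' Q' :: "'x \<Rightarrow> real"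
    unfolding KL_def exp_log_ratio_def by auto
  have "0 < marg_X q x" using assms(2,3) by (rule marg_X_pos)
  consider "p x = 0" | "W x y = 0" | "r y x = 0" using assms(4) by blast
  then have "ereal (\<alpha> / (1 - \<alpha>)) * KL (\<lambda>(x, y). q x y) (\<lambda>(x, y). marg_X q x * W x y) = -\<infinity>
      \<or> exp_log_ratio q r = -\<infinity> \<or> ereal (1 / (1 - \<alpha>)) * KL (marg_X q) p = -\<infinity>"
  proof cases
    case 1
    with \<open>0 < marg_X q x\<close> have "KL (marg_X q) p = \<infinity>" unfolding KL_def by auto
    with neg show ?thesis by simp
  next
    case 2
    with assms(3) have "\<exists>z. 0 < (\<lambda>(x, y). q x y) z \<and> (\<lambda>(x, y). marg_X q x * W x y) z = 0"
      by (intro exI[of _ "(x, y)"]) simp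
    then have "KL (\<lambda>(x, y). q x y) (\<lambda>(x, y). marg_X q x * W x y) = \<infinity>" unfolding KL_def by simp
    with neg show ?thesis by simp
  next
    case 3
    with assms(3) show ?thesis unfolding exp_log_ratio_def by auto
  qed
  moreover have "a + b + c = -\<infinity>"
    if "a \<noteq> \<infinity>" "b \<noteq> \<infinity>" "c \<noteq> \<infinity>" "a = -\<infinity> \<or> b = -\<infinity> \<or> c = -\<infinity>" for a b c :: ereal
    using that by (cases a; cases b; cases c) auto
  ultimately show ?thesis unfolding F_S3_def using not_infty by blast
qed

lemma F_S3_le_F_S1:
  assumes "1 < \<alpha>" and q: "is_pmf (\<lambda>(x, y). q x y)" and r: "r \<in> reverse_channels"
  shows "F_S3 \<alpha> p W q r \<le> F_S1 \<alpha> p W r"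
proof (cases "\<forall>x y. 0 < q x y \<longrightarrow> 0 < p x \<and> 0 < W x y \<and> 0 < r y x")
  case False
  then obtain x y where "0 < q x y" "\<not> (0 < p x \<and> 0 < W x y \<and> 0 < r y x)" by blast
  moreover from this(2) have "p x = 0 \<or> W x y = 0 \<or> r y x = 0"
    using p_nonneg[of x] W_nonneg[of x y] reverse_channelsD(1)[OF r, of y x] by auto
  ultimately show ?thesis using assms by (simp add: F_S3_eq_minus_infinity is_pmf_pairs_iff)
next
  case True
  have q0: "\<And>x y. 0 \<le> q x y" and q1: "(\<Sum>x\<in>UNIV. \<Sum>y\<in>UNIV. q x y) = 1"
    using q by (auto simp: is_pmf_pairs_iff)
  have term_pos: "0 < F_S1_term r x y" if "0 < q x y" for x y
    using True[rule_format, OF that] by (simp add: F_S1_term_def)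
  obtain z where "0 < (\<lambda>(x, y). q x y) z" using q by (rule is_pmf_ex_pos)
  then have "0 < (\<lambda>(x, y). F_S1_term r x y) z" by (cases z) (simp add: term_pos)
  also have "\<dots> \<le> (\<Sum>z\<in>UNIV. (\<lambda>(x, y). F_S1_term r x y) z)"
    by (intro member_le_sum) (auto simp: F_S1_term_nonneg)
  finally have "0 < F_S1_sum r" by (simp add: F_S1_sum_def sum_UNIV_prod)
  have "(\<Sum>z\<in>UNIV. (\<lambda>(x, y). q x y) z * ln ((\<lambda>(x, y). F_S1_term r x y) z / (\<lambda>(x, y). q x y) z))
      \<le> ln (\<Sum>z\<in>UNIV. (\<lambda>(x, y). F_S1_term r x y) z)"
    using q0 q1 term_pos
    by (intro Gibbs_inequality) (auto simp: sum_UNIV_prod F_S1_term_nonneg)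
  then have "(\<Sum>x\<in>UNIV. \<Sum>y\<in>UNIV. q x y * ln (F_S1_term r x y / q x y)) \<le> ln (F_S1_sum r)"
    by (simp add: sum_UNIV_prod F_S1_sum_def)
  then have "\<alpha> / (\<alpha> - 1) * (\<Sum>x\<in>UNIV. \<Sum>y\<in>UNIV. q x y * ln (F_S1_term r x y / q x y))
      \<le> \<alpha> / (\<alpha> - 1) * ln (F_S1_sum r)"
    using \<open>1 < \<alpha>\<close> by (intro mult_left_mono) auto
  then show ?thesis
    using True q0 \<open>1 < \<alpha>\<close> \<open>0 < F_S1_sum r\<close> reverse_channelsD(1)[OF r]
    by (simp add: F_S3_eq_sum F_S1_eq)
qed

definition optimal_joint :: "'x \<Rightarrow> 'y \<Rightarrow> real" where
  "optimal_joint x y = F_S1_term optimal_reverse x y / sibson_sum"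

lemma optimal_joint_pmf: "is_pmf (\<lambda>(x, y). optimal_joint x y)"
  unfolding is_pmf_pairs_iff optimal_joint_def
  using sibson_sum_pos F_S1_sum_optimal_reverse
  by (simp add: F_S1_term_nonneg sum_divide_distrib[symmetric] F_S1_sum_def)

lemma F_S3_optimal_joint: "F_S3 \<alpha> p W optimal_joint optimal_reverse = ereal sibson_value"
proof -
  have supp: "0 < p x \<and> 0 < W x y \<and> 0 < optimal_reverse y x" if "0 < optimal_joint x y" for x y
  proof -
    from that have "F_S1_term optimal_reverse x y \<noteq> 0" by (auto simp: optimal_joint_def)
    then show ?thesis
      using p_nonneg[of x] W_nonneg[of x y] reverse_channelsD(1)[OF optimal_reverse_reverse_channel, of y x]
      by (auto simp: F_S1_term_def order_less_le)
  qed
  have "(\<Sum>x\<in>UNIV. \<Sum>y\<in>UNIV. optimal_joint x y * ln (F_S1_term optimal_reverse x y / optimal_joint x y))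
      = (\<Sum>x\<in>UNIV. \<Sum>y\<in>UNIV. optimal_joint x y * ln sibson_sum)"
    using sibson_sum_pos by (intro sum.cong refl) (auto simp: optimal_joint_def)
  also have "\<dots> = ln sibson_sum"
    using optimal_joint_pmf by (simp add: is_pmf_pairs_iff flip: sum_distrib_right)
  finally show ?thesis
    using optimal_joint_pmf supp by (simp add: F_S3_eq_sum is_pmf_pairs_iff sibson_value_def)
qed

lemma is_max_of_SUP_F_S3:
  assumes "1 < \<alpha>"
  shows "is_max_of (\<lambda>q. SUP r\<in>reverse_channels. F_S3 \<alpha> p W q r)
           {q. is_pmf (\<lambda>(x, y). q x y)} (sibson_MI \<alpha> p W)"
proof -
  have SUP_le: "(SUP r\<in>reverse_channels. F_S3 \<alpha> p W q r) \<le> ereal sibson_value"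
    if "is_pmf (\<lambda>(x, y). q x y)" for q
    using F_S3_le_F_S1[OF assms that] F_S1_le_sibson_value by (blast intro: SUP_least order_trans)
  have "ereal sibson_value \<le> (SUP r\<in>reverse_channels. F_S3 \<alpha> p W optimal_joint r)"
    using optimal_reverse_reverse_channel F_S3_optimal_joint by (metis SUP_upper)
  with SUP_le[OF optimal_joint_pmf]
  have "(SUP r\<in>reverse_channels. F_S3 \<alpha> p W optimal_joint r) = ereal sibson_value" by simp
  then show ?thesis
    unfolding is_max_of_def sibson_MI_eq using SUP_le optimal_joint_pmf by blast
qed

end

theorem theorem1:
  fixes \<alpha> :: real
    and p :: "'x::finite \<Rightarrow> real"
    and W :: "'x \<Rightarrow> 'y::finite \<Rightarrow> real"
  assumes "0 < \<alpha>" and "\<alpha> \<noteq> 1"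
    and "is_pmf p" and "is_channel W"
  shows "is_max_of (F_S1 \<alpha> p W) reverse_channels (sibson_MI \<alpha> p W)
       \<and> is_max_of (F_S2 \<alpha> p W) reverse_channels (sibson_MI \<alpha> p W)
       \<and> (1 < \<alpha> \<longrightarrow>
            is_max_of (\<lambda>q. SUP r\<in>reverse_channels. F_S3 \<alpha> p W q r)
                      {q. is_pmf (\<lambda>(x, y). q x y)} (sibson_MI \<alpha> p W)
          \<and> (\<forall>q. is_pmf (\<lambda>(x, y). q x y) \<longrightarrow>
                 is_max_of (F_S3 \<alpha> p W q) reverse_channels
                           (SUP r\<in>reverse_channels. F_S3 \<alpha> p W q r)))"
proof -
  interpret sibson_setting \<alpha> p W using assms by unfold_locales
  show ?thesis
    using is_max_of_F_S1 is_max_of_F_S2 is_max_of_SUP_F_S3 is_max_of_F_S3 by blast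
qed

end
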